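(* Let $\lambda\in\mathbb{C}$ be an algebraic number with $|\lambda|=1$ that is not a root of unity, and define $u_n=\frac n2\lambda^n+\frac n2\overline{\lambda}^n+(1-n)$. Then for every $p\in\mathbb{N}$ there exists $n\in\mathbb{N}$ such that $u_n,u_{n+1},\dots,u_{n+p-1}$ are all $\le 0$. Consequently (together with the fact that $u_n>0$ infinitely often) the sign description of $\langle u_n\rangle$ is not almost periodic.
   Context: $\overline{\lambda}$ is the complex conjugate. The sign description of a real sequence is $\sigma_n=\mathrm{sgn}(u_n)\in\{-,0,+\}$. An infinite word $\alpha$ is almost periodic if for every finite word $w$ there is $p$ such that either $w$ does not occur in $\alpha$ after position $p$, or $w$ occurs in every factor $\alpha_n\cdots\alpha_{n+p}$. *)

theory Defs
  imports "HOL-Analysis.Analysis" "HOL-Computational_Algebra.Polynomial"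
begin

definition occurs_at :: "(nat \<Rightarrow> 'a) \<Rightarrow> 'a list \<Rightarrow> nat \<Rightarrow> bool" where
  "occurs_at alpha w i \<longleftrightarrow> (\<forall>j<length w. alpha (i + j) = w ! j)"

definition almost_periodic :: "(nat \<Rightarrow> 'a) \<Rightarrow> bool" where
  "almost_periodic alpha \<longleftrightarrow>
     (\<forall>w :: 'a list. \<exists>p :: nat.
        (\<forall>i\<ge>p. \<not> occurs_at alpha w i) \<or>
        (\<forall>n. \<exists>i. n \<le> i \<and> i + length w \<le> n + p + 1 \<and> occurs_at alpha w i))"

definition sign_description :: "(nat \<Rightarrow> real) \<Rightarrow> nat \<Rightarrow> real" where
  "sign_description u n = sgn (u n)"

end

theory Submission
  imports Defs
begin

text \<open>For \<open>|\<lambda>| = 1\<close> one has \<open>u\<^sub>n = 1 - n |\<lambda>\<^sup>n - 1|\<^sup>2 / 2\<close>, so \<open>u\<^sub>n > 0\<close> exactly when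
  \<open>\<lambda>\<^sup>n\<close> lies within distance \<open>\<surd>(2/n)\<close> of \<open>1\<close>. Two such indices \<open>i < j\<close> give
  \<open>|\<lambda>\<^sup>j\<^sup>-\<^sup>i - 1| = |\<lambda>\<^sup>j - \<lambda>\<^sup>i| \<le> \<surd>(2/i) + \<surd>(2/j)\<close>; since \<open>\<lambda>\<close> is not a root of unity,
  \<open>|\<lambda>\<^sup>d - 1|\<close> is bounded below for \<open>0 < d < q\<close>, so positive terms eventually lie at
  distance at least \<open>q\<close> apart, which forces arbitrarily long runs of non-positive
  terms. On the other hand Dirichlet's approximation theorem yields infinitely many
  \<open>n\<close> with \<open>n |\<lambda>\<^sup>n - 1|\<^sup>2 < 2\<close>, i.e. positive terms. A word in which some letter
  occurs infinitely often but is missing from arbitrarily long factors is not almost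
  periodic.\<close>

lemma cmod_minus_one_squared:
  fixes z :: complex
  assumes "cmod z = 1"
  shows "(cmod (z - 1))\<^sup>2 = 2 - 2 * Re z"
proof -
  have "(Re z)\<^sup>2 + (Im z)\<^sup>2 = 1"
    using assms by (simp add: cmod_def)
  moreover have "Re z \<le> 1"
    using abs_Re_le_cmod[of z] assms by simp
  ultimately show ?thesis
    by (simp add: cmod_def power2_eq_square algebra_simps)
qed

lemma weighted_conj_power_sum_eq:
  fixes z :: complex
  assumes "cmod z = 1"
  shows "of_nat n / 2 * z ^ n + of_nat n / 2 * cnj z ^ n + (1 - of_nat n)
           = complex_of_real (1 - real n * (cmod (z ^ n - 1))\<^sup>2 / 2)"
proof -
  have sq: "(cmod (z ^ n - 1))\<^sup>2 = 2 - 2 * Re (z ^ n)"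
    using assms by (intro cmod_minus_one_squared) (simp add: norm_power)
  have "of_nat n / 2 * z ^ n + of_nat n / 2 * cnj z ^ n + (1 - of_nat n)
          = of_nat n / 2 * (z ^ n + cnj z ^ n) + (1 - of_nat n)"
    by (simp only: distrib_left)
  also have "\<dots> = complex_of_real (real n * Re (z ^ n) + 1 - real n)"
    by (simp add: complex_add_cnj flip: complex_cnj_power)
  also have "\<dots> = complex_of_real (1 - real n * (cmod (z ^ n - 1))\<^sup>2 / 2)"
    unfolding of_real_eq_iff sq by (simp add: field_simps)
  finally show ?thesis .
qed

lemma cmod_cis_minus_one_le: "cmod (cis x - 1) \<le> \<bar>x\<bar>"
proof -
  have "(sin (x / 2))\<^sup>2 \<le> (x / 2)\<^sup>2"
    using abs_sin_x_le_abs_x[of "x / 2"] abs_le_square_iff by blast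
  have "(cmod (cis x - 1))\<^sup>2 = 2 - 2 * cos x"
    by (simp add: cmod_minus_one_squared)
  also have "\<dots> = 4 * (sin (x / 2))\<^sup>2"
    using cos_double_sin[of "x / 2"] by simp
  also have "\<dots> \<le> 4 * (x / 2)\<^sup>2"
    using \<open>(sin (x / 2))\<^sup>2 \<le> (x / 2)\<^sup>2\<close> by simp
  also have "\<dots> = \<bar>x\<bar>\<^sup>2"
    by (simp add: power_divide)
  finally show ?thesis
    by (rule power2_le_imp_le) auto
qed

lemma powers_bounded_away_from_one:
  fixes z :: complex
  assumes "\<forall>k>0. z ^ k \<noteq> 1"
  obtains e where "e > 0" "\<And>d. 0 < d \<Longrightarrow> d \<le> q \<Longrightarrow> e \<le> cmod (z ^ d - 1)"
proof
  let ?e = "Min (insert 1 ((\<lambda>d. cmod (z ^ d - 1)) ` {1..q}))"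
  show "?e > 0"
    using assms by (subst Min_gr_iff) auto
  show "?e \<le> cmod (z ^ d - 1)" if "0 < d" "d \<le> q" for d
    using that by (intro Min_le) auto
qed

lemma unit_circle_Dirichlet:
  fixes z :: complex
  assumes "cmod z = 1" "N > 0"
  obtains k where "0 < k" "k \<le> N" "cmod (z ^ k - 1) < 2 * pi / real N"
proof -
  define a where "a = Arg z"
  have "z \<noteq> 0"
    using assms(1) by auto
  then have z: "z = cis a"
    using assms(1) by (simp add: a_def cis_Arg sgn_div_norm)
  obtain h k where hk: "0 < k" "k \<le> int N" "\<bar>of_int k * (a / (2 * pi)) - of_int h\<bar> < 1 / N"
    using Dirichlet_approx[OF assms(2)] by blast
  define x where "x = of_int k * a - 2 * pi * of_int h"
  have "z ^ nat k = cis (x + 2 * pi * of_int h)"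
    using hk(1) Complex.DeMoivre[of a "nat k"] by (simp add: z x_def)
  also have "\<dots> = cis x"
    by (simp add: cis_mult [symmetric])
  finally have "cmod (z ^ nat k - 1) \<le> \<bar>x\<bar>"
    using cmod_cis_minus_one_le by simp
  also have "\<bar>x\<bar> = 2 * pi * \<bar>of_int k * (a / (2 * pi)) - of_int h\<bar>"
    by (simp add: x_def abs_mult field_simps)
  also have "\<dots> < 2 * pi / real N"
    using mult_strict_left_mono[OF hk(3), of "2 * pi"] by simp
  finally show ?thesis
    using hk that[of "nat k"] by simp
qed

lemma infinite_weighted_near_one:
  fixes z :: complex
  assumes "cmod z = 1" "\<forall>k>0. z ^ k \<noteq> 1" "c > 0"
  shows "infinite {n. real n * (cmod (z ^ n - 1))\<^sup>2 < c}"
  unfolding infinite_nat_iff_unbounded_le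
proof
  fix p
  obtain e where e: "e > 0" "\<And>d. 0 < d \<Longrightarrow> d \<le> p \<Longrightarrow> e \<le> cmod (z ^ d - 1)"
    using powers_bounded_away_from_one[OF assms(2)] by blast
  obtain N :: nat where N: "real N > max (2 * pi / e) (4 * pi\<^sup>2 / c)"
    using reals_Archimedean2 by blast
  moreover have "0 < 2 * pi / e"
    using e(1) by simp
  ultimately have "N > 0"
    by (simp add: max_less_iff_conj)
  then obtain k where k: "0 < k" "k \<le> N" "cmod (z ^ k - 1) < 2 * pi / real N"
    using unit_circle_Dirichlet[OF assms(1)] by blast
  have "2 * pi / real N < e"
    using N e(1) \<open>N > 0\<close> by (simp add: field_simps)
  then have "p < k"
    using e(2)[of k] k by fastforce
  have "real k * (cmod (z ^ k - 1))\<^sup>2 \<le> real N * (2 * pi / real N)\<^sup>2"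
    using k by (intro mult_mono power_mono) auto
  also have "\<dots> = 4 * pi\<^sup>2 / real N"
    using \<open>N > 0\<close> by (simp add: power2_eq_square field_simps)
  also have "\<dots> < c"
    using N assms(3) \<open>N > 0\<close> by (simp add: field_simps)
  finally show "\<exists>n\<ge>p. n \<in> {n. real n * (cmod (z ^ n - 1))\<^sup>2 < c}"
    using \<open>p < k\<close> by (intro exI[of _ k]) auto
qed

lemma weighted_near_one_eventually_separated:
  fixes z :: complex
  assumes "cmod z = 1" "\<forall>k>0. z ^ k \<noteq> 1"
  shows "\<forall>\<^sub>F i in sequentially. \<forall>d. 0 < d \<longrightarrow> d < q \<longrightarrow>
           real i * (cmod (z ^ i - 1))\<^sup>2 < c \<longrightarrow>
           \<not> real (i + d) * (cmod (z ^ (i + d) - 1))\<^sup>2 < c"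
proof -
  obtain e where e: "e > 0" "\<And>d. 0 < d \<Longrightarrow> d \<le> q \<Longrightarrow> e \<le> cmod (z ^ d - 1)"
    using powers_bounded_away_from_one[OF assms(2)] by blast
  obtain M :: nat where M: "real M > max 1 (4 * c / e\<^sup>2)"
    using reals_Archimedean2 by blast
  have close: "cmod (z ^ n - 1) < e / 2" if "M \<le> n" "real n * (cmod (z ^ n - 1))\<^sup>2 < c" for n
  proof -
    have "(cmod (z ^ n - 1))\<^sup>2 * real M \<le> (cmod (z ^ n - 1))\<^sup>2 * real n"
      using that(1) by (intro mult_left_mono) auto
    also have "\<dots> < real M * (e / 2)\<^sup>2"
      using that(2) M e(1) by (simp add: field_simps)
    finally have "(cmod (z ^ n - 1))\<^sup>2 < (e / 2)\<^sup>2"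
      using M by (simp add: mult.commute)
    then show ?thesis
      by (rule power_less_imp_less_base) (use e(1) in simp)
  qed
  have "\<not> (real (i + d) * (cmod (z ^ (i + d) - 1))\<^sup>2 < c)"
    if "M \<le> i" "0 < d" "d < q" "real i * (cmod (z ^ i - 1))\<^sup>2 < c" for i d
  proof
    assume "real (i + d) * (cmod (z ^ (i + d) - 1))\<^sup>2 < c"
    then have "cmod (z ^ (i + d) - 1) < e / 2"
      using close[of "i + d"] that(1) by simp
    moreover have "(z ^ (i + d) - 1) - (z ^ i - 1) = z ^ i * (z ^ d - 1)"
      by (simp add: power_add algebra_simps)
    then have "cmod (z ^ d - 1) = cmod ((z ^ (i + d) - 1) - (z ^ i - 1))"
      using assms(1) by (simp add: norm_mult norm_power)
    ultimately have "cmod (z ^ d - 1) < e"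
      using close[OF that(1,4)] norm_triangle_ineq4[of "z ^ (i + d) - 1" "z ^ i - 1"] by simp
    then show False
      using e(2)[of d] that by simp
  qed
  then show ?thesis
    unfolding eventually_sequentially by blast
qed

lemma long_gaps_if_eventually_separated:
  fixes P :: "nat \<Rightarrow> bool"
  assumes "\<forall>\<^sub>F i in sequentially. \<forall>d. 0 < d \<longrightarrow> d < 2 * p \<longrightarrow> P i \<longrightarrow> \<not> P (i + d)"
  shows "\<exists>n. \<forall>k<p. \<not> P (n + k)"
proof -
  obtain M where M: "\<And>i d. M \<le> i \<Longrightarrow> 0 < d \<Longrightarrow> d < 2 * p \<Longrightarrow> P i \<Longrightarrow> \<not> P (i + d)"
    using assms unfolding eventually_sequentially by blast
  show ?thesis
  proof (cases "\<exists>k<p. P (M + k)")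
    case True
    then obtain i where "i < p" "P (M + i)"
      by blast
    then have "\<not> P (M + p + k)" if "k < p" for k
      using M[of "M + i" "p + k - i"] that by (simp add: add.assoc)
    then show ?thesis
      by blast
  qed blast
qed

lemma not_almost_periodic_if_recurrent_with_long_gaps:
  fixes alpha :: "nat \<Rightarrow> 'a"
  assumes "infinite {i. alpha i = a}"
    and "\<And>p. \<exists>n. \<forall>k<p. alpha (n + k) \<noteq> a"
  shows "\<not> almost_periodic alpha"
proof
  have occ: "occurs_at alpha [a] i \<longleftrightarrow> alpha i = a" for i
    by (simp add: occurs_at_def)
  assume "almost_periodic alpha"
  then obtain p where "(\<forall>i\<ge>p. \<not> occurs_at alpha [a] i) \<or>
      (\<forall>n. \<exists>i. n \<le> i \<and> i + length [a] \<le> n + p + 1 \<and> occurs_at alpha [a] i)"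
    unfolding almost_periodic_def by blast
  then consider (absent) "\<forall>i\<ge>p. alpha i \<noteq> a"
    | (recurrent) "\<forall>n. \<exists>i. n \<le> i \<and> i \<le> n + p \<and> alpha i = a"
    by (auto simp: occ)
  then show False
  proof cases
    case absent
    then have "{i. alpha i = a} \<subseteq> {..<p}"
      by (auto simp flip: not_le)
    then show False
      using assms(1) finite_subset by blast
  next
    case recurrent
    obtain n where n: "\<forall>k<Suc p. alpha (n + k) \<noteq> a"
      using assms(2) by blast
    obtain i where i: "n \<le> i" "i \<le> n + p" "alpha i = a"
      using recurrent by blast
    then have "i - n < Suc p"
      by simp
    with n have "alpha (n + (i - n)) \<noteq> a"
      by blast
    with i show False
      by simp
  qed
qed

theorem mainTheorem11:
  fixes lam :: complex and u :: "nat \<Rightarrow> real"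
  assumes "algebraic lam"
    and "cmod lam = 1"
    and "\<not> (\<exists>k>0. lam ^ k = 1)"
    and "\<And>n. complex_of_real (u n) =
           of_nat n / 2 * lam ^ n + of_nat n / 2 * cnj lam ^ n + (1 - of_nat n)"
  shows "(\<forall>p::nat. \<exists>n::nat. \<forall>k<p. u (n + k) \<le> 0)
         \<and> \<not> almost_periodic (sign_description u)"
proof -
  let ?near = "\<lambda>n. real n * (cmod (lam ^ n - 1))\<^sup>2 < 2"
  have not_root: "\<forall>k>0. lam ^ k \<noteq> 1"
    using assms(3) by blast
  have "u n = 1 - real n * (cmod (lam ^ n - 1))\<^sup>2 / 2" for n
    using assms(4)[of n, unfolded weighted_conj_power_sum_eq[OF assms(2)]] of_real_eq_iff by blast
  then have pos_iff: "u n > 0 \<longleftrightarrow> ?near n" for n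
    by simp
  have sign_one_iff: "sign_description u n = 1 \<longleftrightarrow> u n > 0" for n
    by (simp add: sign_description_def sgn_real_def)
  have gaps: "\<exists>n. \<forall>k<p. u (n + k) \<le> 0" for p
    using long_gaps_if_eventually_separated[where P = ?near,
        OF weighted_near_one_eventually_separated[OF assms(2) not_root]]
    by (simp only: pos_iff [symmetric] not_less)
  have "\<not> almost_periodic (sign_description u)"
  proof (rule not_almost_periodic_if_recurrent_with_long_gaps)
    show "infinite {i. sign_description u i = 1}"
      unfolding sign_one_iff pos_iff by (rule infinite_weighted_near_one[OF assms(2) not_root]) simp
    show "\<exists>n. \<forall>k<p. sign_description u (n + k) \<noteq> 1" for p
      using gaps[of p] unfolding sign_one_iff not_less .
  qed
  with gaps show ?thesis
    by blast
qed

end
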